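(* Let $(V,\le,\preccurlyeq)$ be a mixed lattice vector space. Then for all $x,y\in V$, $$ s(x^u-y^u)\le s(x-y). $$
   Context: A mixed lattice vector space $(V,\le,\preccurlyeq)$ is a real vector space $V$ with two partial orderings $\le$ (the initial order) and $\preccurlyeq$ (the specific order), each making $V$ a partially ordered vector space (i.e. $u\le v$ implies $u+w\le v+w$ and $au\le av$ for all $w\in V$, $a\ge 0$; likewise for $\preccurlyeq$), with positive cones $V_p=\{x:0\le x\}$ and $V_{sp}=\{x:0\preccurlyeq x\}$, such that: (1) for all $x,y\in V$ the mixed upper envelope $x\curlyvee y=\min\{w\in V: w\succcurlyeq x \text{ and } w\ge y\}$ and the mixed lower envelope $x\curlywedge y=\max\{w\in V: w\preccurlyeq x \text{ and } w\le y\}$ exist, where the minimum and maximum are taken with respect to $\le$; (2) $x\preccurlyeq y$ implies $x\le y$; (3) $x\curlyvee y$ and $x\curlywedge y$ belong to $V_{sp}$ whenever $x,y\in V_{sp}$. Notation: $x^u=0\curlyvee x$, $x^l=0\curlyvee(-x)$, ${}^ux=x\curlyvee 0$, ${}^lx=(-x)\curlyvee 0$, and the symmetric generalized absolute value $s(x)=x^u+x^l$ (which also equals ${}^ux+{}^lx$). *)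

theory Defs
  imports Main "HOL.Real_Vector_Spaces"
begin

definition ordered_vs :: "('a::real_vector \<Rightarrow> 'a \<Rightarrow> bool) \<Rightarrow> bool" where
  "ordered_vs r \<longleftrightarrow>
     (\<forall>x. r x x) \<and>
     (\<forall>x y. r x y \<and> r y x \<longrightarrow> x = y) \<and>
     (\<forall>x y z. r x y \<and> r y z \<longrightarrow> r x z) \<and>
     (\<forall>u v w. r u v \<longrightarrow> r (u + w) (v + w)) \<and>
     (\<forall>u v (a::real). r u v \<and> 0 \<le> a \<longrightarrow> r (a *\<^sub>R u) (a *\<^sub>R v))"

definition is_least_wrt :: "('a \<Rightarrow> 'a \<Rightarrow> bool) \<Rightarrow> 'a set \<Rightarrow> 'a \<Rightarrow> bool" where
  "is_least_wrt r S m \<longleftrightarrow> m \<in> S \<and> (\<forall>w\<in>S. r m w)"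

definition is_greatest_wrt :: "('a \<Rightarrow> 'a \<Rightarrow> bool) \<Rightarrow> 'a set \<Rightarrow> 'a \<Rightarrow> bool" where
  "is_greatest_wrt r S m \<longleftrightarrow> m \<in> S \<and> (\<forall>w\<in>S. r w m)"

definition mup :: "('a \<Rightarrow> 'a \<Rightarrow> bool) \<Rightarrow> ('a \<Rightarrow> 'a \<Rightarrow> bool) \<Rightarrow> 'a \<Rightarrow> 'a \<Rightarrow> 'a" where
  "mup le sle x y = (THE m. is_least_wrt le {w. sle x w \<and> le y w} m)"

definition mlow :: "('a \<Rightarrow> 'a \<Rightarrow> bool) \<Rightarrow> ('a \<Rightarrow> 'a \<Rightarrow> bool) \<Rightarrow> 'a \<Rightarrow> 'a \<Rightarrow> 'a" where
  "mlow le sle x y = (THE m. is_greatest_wrt le {w. sle w x \<and> le w y} m)"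

definition mixed_lattice_vs ::
  "('a::real_vector \<Rightarrow> 'a \<Rightarrow> bool) \<Rightarrow> ('a \<Rightarrow> 'a \<Rightarrow> bool) \<Rightarrow> bool" where
  "mixed_lattice_vs le sle \<longleftrightarrow>
     ordered_vs le \<and> ordered_vs sle \<and>
     (\<forall>x y. \<exists>m. is_least_wrt le {w. sle x w \<and> le y w} m) \<and>
     (\<forall>x y. \<exists>m. is_greatest_wrt le {w. sle w x \<and> le w y} m) \<and>
     (\<forall>x y. sle x y \<longrightarrow> le x y) \<and>
     (\<forall>x y. sle 0 x \<and> sle 0 y \<longrightarrow> sle 0 (mup le sle x y) \<and> sle 0 (mlow le sle x y))"

definition upart :: "('a::real_vector \<Rightarrow> 'a \<Rightarrow> bool) \<Rightarrow> ('a \<Rightarrow> 'a \<Rightarrow> bool) \<Rightarrow> 'a \<Rightarrow> 'a" where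
  "upart le sle x = mup le sle 0 x"

definition lpart :: "('a::real_vector \<Rightarrow> 'a \<Rightarrow> bool) \<Rightarrow> ('a \<Rightarrow> 'a \<Rightarrow> bool) \<Rightarrow> 'a \<Rightarrow> 'a" where
  "lpart le sle x = mup le sle 0 (- x)"

definition sabs :: "('a::real_vector \<Rightarrow> 'a \<Rightarrow> bool) \<Rightarrow> ('a \<Rightarrow> 'a \<Rightarrow> bool) \<Rightarrow> 'a \<Rightarrow> 'a" where
  "sabs le sle x = upart le sle x + lpart le sle x"

end

theory Submission
  imports Defs
begin

text \<open>Since \<open>x\<^sup>u\<close> is the least \<open>w \<succcurlyeq> 0\<close> with \<open>w \<ge> x\<close>, the map \<open>x \<mapsto> x\<^sup>u\<close> is subadditive;
  hence \<open>x\<^sup>u - y\<^sup>u \<le> (x - y)\<^sup>u\<close>, and as \<open>(x - y)\<^sup>u \<succcurlyeq> 0\<close> this gives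
  \<open>(x\<^sup>u - y\<^sup>u)\<^sup>u \<le> (x - y)\<^sup>u\<close>. Exchanging \<open>x\<close> and \<open>y\<close> bounds the lower parts, because
  \<open>z\<^sup>l = (-z)\<^sup>u\<close>, and adding the two inequalities bounds \<open>s\<close>.\<close>

lemma ordered_vs_trans: "ordered_vs r \<Longrightarrow> r x y \<Longrightarrow> r y z \<Longrightarrow> r x z"
  unfolding ordered_vs_def by meson

lemma ordered_vs_antisym: "ordered_vs r \<Longrightarrow> r x y \<Longrightarrow> r y x \<Longrightarrow> x = y"
  unfolding ordered_vs_def by meson

lemma ordered_vs_add_right: "ordered_vs r \<Longrightarrow> r u v \<Longrightarrow> r (u + w) (v + w)"
  unfolding ordered_vs_def by meson

lemma ordered_vs_add_mono:
  assumes r: "ordered_vs r" and "r a b" and "r c d"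
  shows "r (a + c) (b + d)"
proof -
  have "r (a + c) (b + c)" using ordered_vs_add_right[OF r \<open>r a b\<close>] .
  moreover have "r (c + b) (d + b)" using ordered_vs_add_right[OF r \<open>r c d\<close>] .
  then have "r (b + c) (b + d)" by (simp add: add.commute)
  ultimately show ?thesis using ordered_vs_trans[OF r] by blast
qed

lemma ordered_vs_diff_le_iff_le_add:
  assumes r: "ordered_vs r"
  shows "r (a - b) c \<longleftrightarrow> r a (c + b)"
proof
  assume "r (a - b) c"
  from ordered_vs_add_right[OF r this, of b] show "r a (c + b)" by simp
next
  assume "r a (c + b)"
  from ordered_vs_add_right[OF r this, of "- b"] show "r (a - b) c" by simp
qed

context
  fixes le sle :: "'a::real_vector \<Rightarrow> 'a \<Rightarrow> bool"
  assumes mixed: "mixed_lattice_vs le sle"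
begin

lemma ordered_vs_le: "ordered_vs le"
  and ordered_vs_sle: "ordered_vs sle"
  using mixed unfolding mixed_lattice_vs_def by simp_all

lemma mup_is_least: "is_least_wrt le {w. sle x w \<and> le y w} (mup le sle x y)"
proof -
  obtain m where m: "is_least_wrt le {w. sle x w \<and> le y w} m"
    using mixed unfolding mixed_lattice_vs_def by blast
  have "mup le sle x y = m"
    unfolding mup_def
  proof (rule the_equality)
    fix n assume "is_least_wrt le {w. sle x w \<and> le y w} n"
    with m show "n = m"
      unfolding is_least_wrt_def by (blast intro: ordered_vs_antisym[OF ordered_vs_le])
  qed (fact m)
  with m show ?thesis by simp
qed

lemma upart_sge_zero: "sle 0 (upart le sle x)"
  and upart_ge: "le x (upart le sle x)"
  and upart_least: "sle 0 w \<Longrightarrow> le x w \<Longrightarrow> le (upart le sle x) w"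
  using mup_is_least[of 0 x] unfolding upart_def is_least_wrt_def by auto

lemma upart_add_le: "le (upart le sle (a + b)) (upart le sle a + upart le sle b)"
proof (rule upart_least)
  \<comment> \<open>\<open>r\<close> is instantiated before \<open>OF\<close>: unifying \<open>?r ?a ?b\<close> with the premises diverges.\<close>
  show "sle 0 (upart le sle a + upart le sle b)"
    using ordered_vs_add_mono[where r = sle, OF ordered_vs_sle upart_sge_zero upart_sge_zero] by simp
  show "le (a + b) (upart le sle a + upart le sle b)"
    using ordered_vs_add_mono[where r = le, OF ordered_vs_le upart_ge upart_ge] .
qed

lemma upart_diff_le_upart_diff: "le (upart le sle x - upart le sle y) (upart le sle (x - y))"
  unfolding ordered_vs_diff_le_iff_le_add[OF ordered_vs_le]
  using upart_add_le[of "x - y" y] by simp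

lemma upart_upart_diff_le: "le (upart le sle (upart le sle x - upart le sle y)) (upart le sle (x - y))"
  using upart_least[OF upart_sge_zero upart_diff_le_upart_diff] .

end

lemma lpart_eq_upart_uminus: "lpart le sle z = upart le sle (- z)"
  by (simp add: lpart_def upart_def)

theorem lemma2p8:
  fixes le sle :: "'a::real_vector \<Rightarrow> 'a \<Rightarrow> bool"
  assumes "mixed_lattice_vs le sle"
  shows "\<forall>x y. le (sabs le sle (upart le sle x - upart le sle y)) (sabs le sle (x - y))"
proof (intro allI)
  fix x y :: 'a
  have upper: "le (upart le sle (upart le sle x - upart le sle y)) (upart le sle (x - y))"
    using upart_upart_diff_le[OF assms] .
  have "le (upart le sle (upart le sle y - upart le sle x)) (upart le sle (y - x))"
    using upart_upart_diff_le[OF assms] .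
  then have lower: "le (lpart le sle (upart le sle x - upart le sle y)) (lpart le sle (x - y))"
    unfolding lpart_eq_upart_uminus minus_diff_eq .
  show "le (sabs le sle (upart le sle x - upart le sle y)) (sabs le sle (x - y))"
    unfolding sabs_def using ordered_vs_add_mono[where r = le, OF ordered_vs_le[OF assms] upper lower] .
qed

end
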